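(* Let $f_\xi$ be an invariant probability density of $L_\xi$ and let $\tilde f\in L^1([0,1])$. Then $$\|(\pi_\delta-1)f_\xi\|_{L^1}\le\frac\delta2\xi^{-1}\mathrm{Var}(\rho)\,\|f_\xi-\tilde f\|_{L^1}+\frac\delta2\,\mathrm{Var}(N_\xi L\tilde f).$$
   Context: $T:[0,1]\to[0,1]$ is measurable (nonsingular), $L$ its transfer operator. $\rho$ is of bounded variation supported in $[-1/2,1/2]$, $\int\rho=1$, $\rho_\xi(x)=\xi^{-1}\rho(x/\xi)$, $\mathrm{Var}$ is total variation; with $\pi(x)=\min_{i\in\mathbb Z}|x-2i|$, $N_\xi f=\pi_*(\rho_\xi*\hat f)$ ($\hat f$ extension by $0$, $\pi_*$ pushforward by $\pi$); $L_\xi=N_\xi L$. $\pi_\delta$ is the Ulam projection on the homogeneous partition of $[0,1]$ into intervals of length $\delta$ (replacing a function by its average on each interval). *)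

theory Defs
  imports "HOL-Analysis.Analysis"
begin

definition tvar :: "(real \<Rightarrow> real) \<Rightarrow> real set \<Rightarrow> ereal" where
  "tvar f S = (SUP p \<in> {(x, n). (\<forall>i<n. x i \<le> x (Suc i)) \<and> (\<forall>i\<le>n. x i \<in> S)}.
       ereal (\<Sum>i<snd p. \<bar>f (fst p (Suc i)) - f (fst p i)\<bar>))"

definition nonsingular_map :: "(real \<Rightarrow> real) \<Rightarrow> bool" where
  "nonsingular_map T \<longleftrightarrow> (\<forall>x\<in>{0..1}. T x \<in> {0..1})
     \<and> T \<in> borel_measurable (restrict_space lebesgue {0..1})
     \<and> (\<forall>A \<in> null_sets lebesgue. A \<subseteq> {0..1} \<longrightarrow> T -` A \<inter> {0..1} \<in> null_sets lebesgue)"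

definition transfer_operator :: "(real \<Rightarrow> real) \<Rightarrow> ((real \<Rightarrow> real) \<Rightarrow> (real \<Rightarrow> real)) \<Rightarrow> bool" where
  "transfer_operator T L \<longleftrightarrow> (\<forall>f. set_integrable lebesgue {0..1} f \<longrightarrow>
      set_integrable lebesgue {0..1} (L f) \<and>
      (\<forall>g. g \<in> borel_measurable borel \<longrightarrow> bounded (range g) \<longrightarrow>
         (LINT x:{0..1}|lebesgue. L f x * g x) = (LINT x:{0..1}|lebesgue. f x * g (T x))))"

definition rescale :: "(real \<Rightarrow> real) \<Rightarrow> real \<Rightarrow> real \<Rightarrow> real" where
  "rescale \<rho> \<xi> x = \<rho> (x / \<xi>) / \<xi>"

text \<open>Convolution rho_xi * \<hat>f, where \<hat>f is f on [0,1] extended by 0.\<close>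
definition conv_ext :: "(real \<Rightarrow> real) \<Rightarrow> real \<Rightarrow> (real \<Rightarrow> real) \<Rightarrow> real \<Rightarrow> real" where
  "conv_ext \<rho> \<xi> f x = (LINT y:{0..1}|lebesgue. rescale \<rho> \<xi> (x - y) * f y)"

text \<open>Density of the pushforward under pi(x) = min_i |x - 2i| (folding map onto [0,1]):
  the preimages of y are the points 2i + y and 2i - y (i integer); at y = 0, 1 this is the
  continuous extension.\<close>
definition fold_push :: "(real \<Rightarrow> real) \<Rightarrow> real \<Rightarrow> real" where
  "fold_push h y = (\<Sum>\<^sub>\<infinity> i::int. h (2 * real_of_int i + y) + h (2 * real_of_int i - y))"

definition noise_op :: "(real \<Rightarrow> real) \<Rightarrow> real \<Rightarrow> (real \<Rightarrow> real) \<Rightarrow> real \<Rightarrow> real" where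
  "noise_op \<rho> \<xi> f = fold_push (conv_ext \<rho> \<xi> f)"

definition ulam :: "nat \<Rightarrow> (real \<Rightarrow> real) \<Rightarrow> real \<Rightarrow> real" where
  "ulam n f x = (let k = min (n - 1) (nat \<lfloor>x * real n\<rfloor>) in
      real n * (LINT y:{real k / real n .. real (Suc k) / real n}|lebesgue. f y))"

end

theory Submission
  imports Defs
begin

text \<open>Since \<open>f\<^sub>\<xi> = N\<^sub>\<xi> L f\<^sub>\<xi>\<close> almost everywhere, it suffices to bound the Ulam error of
  \<open>g = N\<^sub>\<xi> L f\<^sub>\<xi>\<close>. On each cell of length \<open>\<delta>\<close> the mean absolute deviation of \<open>g\<close> from its
  average is at most \<open>\<delta>/2\<close> times the oscillation of \<open>g\<close> there, and the oscillations over the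
  cells add up to at most \<open>Var(g)\<close>. Writing \<open>L f\<^sub>\<xi> = L f' + (L f\<^sub>\<xi> - L f')\<close>, the variation of \<open>g\<close>
  is at most \<open>Var(N\<^sub>\<xi> L f')\<close> plus that of \<open>N\<^sub>\<xi>\<close> applied to the difference: convolution with
  \<open>\<rho>\<^sub>\<xi>\<close> turns \<open>h \<in> L\<^sup>1\<close> into a function of variation at most \<open>\<xi>\<^sup>-\<^sup>1 Var(\<rho>) \<parallel>h\<parallel>\<^sub>1\<close>, folding by
  \<open>\<pi>\<close> does not increase variation, and \<open>L\<close> is an \<open>L\<^sup>1\<close> contraction.\<close>

section \<open>Variation along finite lists\<close>

fun variation_along :: "(real \<Rightarrow> real) \<Rightarrow> real list \<Rightarrow> real" where
  "variation_along f (x # y # zs) = \<bar>f y - f x\<bar> + variation_along f (y # zs)"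
| "variation_along f _ = 0"

lemma variation_along_nonneg: "0 \<le> variation_along f xs"
  by (induction f xs rule: variation_along.induct) auto

lemma variation_along_Cons_ge: "variation_along f xs \<le> variation_along f (x # xs)"
  by (cases xs) (auto simp: variation_along_nonneg)

lemma variation_along_append_ge:
  "variation_along f xs + variation_along f ys \<le> variation_along f (xs @ ys)"
  by (induction f xs rule: variation_along.induct) (auto simp: variation_along_Cons_ge)

lemma variation_along_concat_ge:
  "sum_list (map (variation_along f) xss) \<le> variation_along f (concat xss)"
proof (induction xss)
  case (Cons xs xss)
  then show ?case using variation_along_append_ge[of f xs "concat xss"] by simp
qed simp

lemma variation_along_snoc:
  "variation_along f (xs @ [a, b]) = variation_along f (xs @ [a]) + \<bar>f b - f a\<bar>"
  by (induction f xs rule: variation_along.induct) auto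

lemma variation_along_rev: "variation_along f (rev xs) = variation_along f xs"
proof (induction f xs rule: variation_along.induct)
  case (1 f x y zs)
  have "variation_along f (rev (x # y # zs)) = variation_along f (rev zs @ [y, x])" by simp
  also have "\<dots> = variation_along f (rev (y # zs)) + \<bar>f x - f y\<bar>"
    by (simp add: variation_along_snoc)
  finally show ?case using "1.IH" by (simp add: abs_minus_commute)
qed auto

lemma variation_along_map: "variation_along f (map h xs) = variation_along (f \<circ> h) xs"
  by (induction "f \<circ> h" xs rule: variation_along.induct) auto

lemma variation_along_divide:
  "variation_along (\<lambda>x. f x / c) xs = variation_along f xs / \<bar>c\<bar>"
  by (induction f xs rule: variation_along.induct)
     (auto simp: diff_divide_distrib[symmetric] add_divide_distrib abs_divide)

lemma variation_along_add_le:
  assumes "\<And>x. x \<in> set xs \<Longrightarrow> f x = f1 x + f2 x"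
  shows "variation_along f xs \<le> variation_along f1 xs + variation_along f2 xs"
  using assms
proof (induction f xs rule: variation_along.induct)
  case (1 f x y zs)
  have "\<bar>f y - f x\<bar> \<le> \<bar>f1 y - f1 x\<bar> + \<bar>f2 y - f2 x\<bar>" using "1.prems" by simp
  with 1 show ?case by simp
qed auto

lemma variation_along_eq_sum:
  "variation_along f xs = (\<Sum>i<length xs - 1. \<bar>f (xs ! Suc i) - f (xs ! i)\<bar>)"
  by (induction f xs rule: variation_along.induct)
     (simp_all add: sum.lessThan_Suc_shift del: sum.lessThan_Suc)

lemma tvar_leI:
  assumes "\<And>xs. sorted xs \<Longrightarrow> set xs \<subseteq> S \<Longrightarrow> xs \<noteq> [] \<Longrightarrow> ereal (variation_along f xs) \<le> B"
  shows "tvar f S \<le> B"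
  unfolding tvar_def
proof (rule SUP_least, clarify)
  fix x n assume mono: "\<forall>i<n. x i \<le> x (Suc i)" and in_S: "\<forall>i\<le>n. x i \<in> S"
  let ?xs = "map x [0..<Suc n]"
  have "sorted ?xs" unfolding sorted_iff_nth_Suc using mono by (simp del: upt_Suc)
  moreover have "set ?xs \<subseteq> S" using in_S by auto
  ultimately have "ereal (variation_along f ?xs) \<le> B" by (intro assms) auto
  then show "ereal (\<Sum>i<snd (x, n). \<bar>f (fst (x, n) (Suc i)) - f (fst (x, n) i)\<bar>) \<le> B"
    by (simp add: variation_along_eq_sum del: upt_Suc)
qed

lemma variation_along_le_tvar:
  assumes "sorted xs" "set xs \<subseteq> S" "xs \<noteq> []"
  shows "ereal (variation_along f xs) \<le> tvar f S"
  unfolding tvar_def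
proof (rule SUP_upper2)
  show "((!) xs, length xs - 1) \<in> {(x, n). (\<forall>i<n. x i \<le> x (Suc i)) \<and> (\<forall>i\<le>n. x i \<in> S)}"
    using assms
    by (auto simp: sorted_iff_nth_Suc intro!: nth_mem[THEN subsetD[OF assms(2)]] dest: le_imp_less_Suc)
qed (simp add: variation_along_eq_sum)

lemma tvar_nonneg: "S \<noteq> {} \<Longrightarrow> 0 \<le> tvar f S"
  using variation_along_le_tvar[of "[s]" S f for s] by (auto simp: zero_ereal_def)

lemma tvar_finite_bound:
  assumes "tvar f S < \<infinity>" "S \<noteq> {}"
  obtains V where "tvar f S = ereal V" "0 \<le> V"
    "\<And>xs. sorted xs \<Longrightarrow> set xs \<subseteq> S \<Longrightarrow> variation_along f xs \<le> V"
proof -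
  obtain V where V: "tvar f S = ereal V"
    using assms tvar_nonneg[of S f] by (cases "tvar f S") auto
  have "0 \<le> V" using tvar_nonneg[OF assms(2), of f] V by simp
  moreover have "variation_along f xs \<le> V" if "sorted xs" "set xs \<subseteq> S" for xs
    using variation_along_le_tvar[OF that, of f] V \<open>0 \<le> V\<close> by (cases "xs = []") auto
  ultimately show thesis using V that by blast
qed

lemma tvar_le_add:
  assumes "\<And>xs. sorted xs \<Longrightarrow> set xs \<subseteq> S \<Longrightarrow> variation_along f xs \<le> variation_along g xs + c"
  shows "tvar f S \<le> tvar g S + ereal c"
proof (rule tvar_leI)
  fix xs assume xs: "sorted xs" "set xs \<subseteq> S" "xs \<noteq> []"
  have "ereal (variation_along f xs) \<le> ereal (variation_along g xs) + ereal c"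
    using assms[OF xs(1,2)] by simp
  also have "\<dots> \<le> tvar g S + ereal c"
    using variation_along_le_tvar[OF xs] by (rule add_right_mono)
  finally show "ereal (variation_along f xs) \<le> tvar g S + ereal c" .
qed

lemma abs_le_variation_bound:
  assumes "\<And>xs. sorted xs \<Longrightarrow> variation_along f xs \<le> V" and "f c = 0"
  shows "\<bar>f t\<bar> \<le> V"
  using assms(1)[of "[min t c, max t c]"] assms(2)
  by (cases "t \<le> c") (auto simp: min_def max_def abs_minus_commute)

section \<open>The noise operator\<close>

lemma rescale_shift_measurable:
  assumes "\<rho> \<in> borel_measurable lebesgue" "\<xi> \<noteq> 0"
  shows "(\<lambda>y. rescale \<rho> \<xi> (x - y)) \<in> borel_measurable lebesgue"
proof -
  have "(\<lambda>y::real. x/\<xi> + (-1/\<xi>) * y) \<in> lebesgue \<rightarrow>\<^sub>M lebesgue"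
    using lebesgue_affine_measurable[where c="\<lambda>_. -1/\<xi>" and t="x/\<xi>"] assms(2) by simp
  from measurable_comp[OF this assms(1)]
  have "(\<lambda>y. \<rho> (x/\<xi> + (-1/\<xi>) * y) / \<xi>) \<in> borel_measurable lebesgue"
    by (simp add: o_def)
  then show ?thesis using assms(2) by (simp add: rescale_def diff_divide_distrib)
qed

lemma rescale_shift_times_integrable:
  assumes "\<rho> \<in> borel_measurable lebesgue" "\<xi> > 0" "\<And>t. \<bar>\<rho> t\<bar> \<le> R"
    and "set_integrable lebesgue A h"
  shows "set_integrable lebesgue A (\<lambda>y. rescale \<rho> \<xi> (x - y) * h y)"
proof (rule set_integrable_bound[where f="\<lambda>y. R / \<xi> * h y"])
  show "set_integrable lebesgue A (\<lambda>y. R / \<xi> * h y)" using assms(4) by simp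
  have "(\<lambda>y. rescale \<rho> \<xi> (x - y) * (indicator A y *\<^sub>R h y)) \<in> borel_measurable lebesgue"
    using rescale_shift_measurable[of \<rho> \<xi> x] assms
      borel_measurable_integrable[OF assms(4)[unfolded set_integrable_def]]
    by (intro borel_measurable_times) auto
  then show "set_borel_measurable lebesgue A (\<lambda>y. rescale \<rho> \<xi> (x - y) * h y)"
    unfolding set_borel_measurable_def by (simp add: mult.left_commute)
  have "\<bar>rescale \<rho> \<xi> (x - y)\<bar> * \<bar>h y\<bar> \<le> R / \<xi> * \<bar>h y\<bar>" for y
    using assms(2) assms(3)[of "(x - y) / \<xi>"]
    by (intro mult_right_mono) (simp_all add: rescale_def divide_right_mono)
  moreover have "0 \<le> R" using assms(3)[of 0] by simp
  ultimately show "AE y in lebesgue. y \<in> A \<longrightarrow> norm (rescale \<rho> \<xi> (x - y) * h y) \<le> norm (R / \<xi> * h y)"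
    using assms(2) by (intro AE_I2) (simp add: abs_mult)
qed

lemma conv_ext_diff:
  assumes "\<rho> \<in> borel_measurable lebesgue" "\<xi> > 0" "\<And>t. \<bar>\<rho> t\<bar> \<le> R"
    and "set_integrable lebesgue {0..1} f1" "set_integrable lebesgue {0..1} f2"
  shows "conv_ext \<rho> \<xi> (\<lambda>y. f1 y - f2 y) x = conv_ext \<rho> \<xi> f1 x - conv_ext \<rho> \<xi> f2 x"
  unfolding conv_ext_def
  using set_integral_diff(2)[OF rescale_shift_times_integrable[OF assms(1-3,4)]
      rescale_shift_times_integrable[OF assms(1-3,5)]]
  by (simp add: right_diff_distrib)

lemma conv_ext_eq_0:
  assumes "\<forall>x. \<bar>x\<bar> > 1/2 \<longrightarrow> \<rho> x = 0" "\<xi> > 0" "x \<notin> {-\<xi>/2..1 + \<xi>/2}"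
  shows "conv_ext \<rho> \<xi> h x = 0"
proof -
  have vanish: "rescale \<rho> \<xi> (x - y) = 0" if "y \<in> {0..1}" for y
  proof -
    have "\<bar>x - y\<bar> > \<xi> / 2" using that assms(3) by (auto simp: abs_if)
    then have "\<bar>(x - y) / \<xi>\<bar> > 1/2" using assms(2) by (simp add: field_simps)
    then show ?thesis using assms(1) by (simp add: rescale_def)
  qed
  then show ?thesis
    using set_lebesgue_integral_cong[of "{0..1}" lebesgue "\<lambda>y. rescale \<rho> \<xi> (x - y) * h y" "\<lambda>_. 0"]
    by (simp add: conv_ext_def)
qed

text \<open>Integrability of the bound is proved alongside it, because each induction step needs it.\<close>
lemma variation_along_conv_ext_le_integral:
  assumes "\<rho> \<in> borel_measurable lebesgue" "\<xi> > 0" "\<And>t. \<bar>\<rho> t\<bar> \<le> R"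
    and h: "set_integrable lebesgue {0..1} h"
  shows "set_integrable lebesgue {0..1} (\<lambda>y. variation_along (\<lambda>x. rescale \<rho> \<xi> (x - y)) xs * \<bar>h y\<bar>)
    \<and> variation_along (conv_ext \<rho> \<xi> h) xs
        \<le> (LINT y:{0..1}|lebesgue. variation_along (\<lambda>x. rescale \<rho> \<xi> (x - y)) xs * \<bar>h y\<bar>)"
proof (induction "conv_ext \<rho> \<xi> h" xs rule: variation_along.induct)
  case (1 x z zs)
  let ?k = "\<lambda>x y. rescale \<rho> \<xi> (x - y)"
  let ?V = "\<lambda>y. variation_along (\<lambda>x. ?k x y) (z # zs) * \<bar>h y\<bar>"
  have diff: "set_integrable lebesgue {0..1} (\<lambda>y. (?k z y - ?k x y) * h y)"
    using set_integral_diff(1)[OF rescale_shift_times_integrable[OF assms, of z]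
        rescale_shift_times_integrable[OF assms, of x]]
    by (simp add: left_diff_distrib)
  have abs_diff: "set_integrable lebesgue {0..1} (\<lambda>y. \<bar>?k z y - ?k x y\<bar> * \<bar>h y\<bar>)"
    using set_integrable_abs[OF diff] by (simp add: abs_mult)
  have "conv_ext \<rho> \<xi> h z - conv_ext \<rho> \<xi> h x = (LINT y:{0..1}|lebesgue. (?k z y - ?k x y) * h y)"
    using set_integral_diff(2)[OF rescale_shift_times_integrable[OF assms, of z]
        rescale_shift_times_integrable[OF assms, of x]]
    by (simp add: conv_ext_def left_diff_distrib)
  then have "\<bar>conv_ext \<rho> \<xi> h z - conv_ext \<rho> \<xi> h x\<bar>
      \<le> (LINT y:{0..1}|lebesgue. \<bar>?k z y - ?k x y\<bar> * \<bar>h y\<bar>)"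
    using set_integral_norm_bound[OF diff] by (simp add: abs_mult)
  with "1.hyps" have "variation_along (conv_ext \<rho> \<xi> h) (x # z # zs)
      \<le> (LINT y:{0..1}|lebesgue. \<bar>?k z y - ?k x y\<bar> * \<bar>h y\<bar>) + (LINT y:{0..1}|lebesgue. ?V y)"
    by simp
  also have "\<dots> = (LINT y:{0..1}|lebesgue. variation_along (\<lambda>x. ?k x y) (x # z # zs) * \<bar>h y\<bar>)"
    using set_integral_add(2)[OF abs_diff "1.hyps"[THEN conjunct1]] by (simp add: distrib_right)
  finally show ?case
    using set_integral_add(1)[OF abs_diff "1.hyps"[THEN conjunct1]] by (simp add: distrib_right)
qed auto

lemma variation_along_conv_ext_le:
  assumes "\<rho> \<in> borel_measurable lebesgue" "\<xi> > 0" "\<And>t. \<bar>\<rho> t\<bar> \<le> R"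
    and \<rho>_var: "\<And>xs. sorted xs \<Longrightarrow> variation_along \<rho> xs \<le> R"
    and h: "set_integrable lebesgue {0..1} h" and "sorted xs"
  shows "variation_along (conv_ext \<rho> \<xi> h) xs \<le> R / \<xi> * (LINT y:{0..1}|lebesgue. \<bar>h y\<bar>)"
proof -
  note conv_le = variation_along_conv_ext_le_integral[OF assms(1-3) h, of xs]
  have translate_le: "variation_along (\<lambda>x. rescale \<rho> \<xi> (x - y)) xs \<le> R / \<xi>" for y
  proof -
    have "variation_along (\<lambda>x. rescale \<rho> \<xi> (x - y)) xs
        = variation_along \<rho> (map (\<lambda>x. (x - y) / \<xi>) xs) / \<xi>"
      using assms(2) variation_along_divide[of "\<lambda>x. \<rho> ((x - y) / \<xi>)" \<xi> xs]
      by (simp add: rescale_def variation_along_map o_def)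
    moreover have "sorted (map (\<lambda>x. (x - y) / \<xi>) xs)"
      using \<open>sorted xs\<close> assms(2) by (auto simp: sorted_iff_nth_mono divide_right_mono)
    ultimately show ?thesis using \<rho>_var assms(2) by (simp add: divide_right_mono)
  qed
  have "variation_along (conv_ext \<rho> \<xi> h) xs
      \<le> (LINT y:{0..1}|lebesgue. variation_along (\<lambda>x. rescale \<rho> \<xi> (x - y)) xs * \<bar>h y\<bar>)"
    using conv_le by simp
  also have "\<dots> \<le> (LINT y:{0..1}|lebesgue. R / \<xi> * \<bar>h y\<bar>)"
    using conv_le set_integrable_abs[OF h] translate_le
    by (intro set_integral_mono mult_right_mono) auto
  finally show ?thesis by simp
qed

lemma fold_push_eq_sum:
  assumes "r \<ge> 0" "\<And>x. x \<notin> {-r..1 + r} \<Longrightarrow> c x = 0" and "y \<in> {0..1}"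
  shows "fold_push c y
    = (\<Sum>i\<in>{-(\<lceil>r\<rceil>+1)..\<lceil>r\<rceil>+1}. c (2 * real_of_int i + y) + c (2 * real_of_int i - y))"
proof -
  have "fold_push c y = (\<Sum>\<^sub>\<infinity>i\<in>{-(\<lceil>r\<rceil>+1)..\<lceil>r\<rceil>+1}. c (2 * real_of_int i + y) + c (2 * real_of_int i - y))"
    unfolding fold_push_def
  proof (rule infsum_cong_neutral)
    fix i :: int assume "i \<in> UNIV - {-(\<lceil>r\<rceil>+1)..\<lceil>r\<rceil>+1}"
    then have "real_of_int i \<ge> \<lceil>r\<rceil> + 2 \<or> real_of_int i \<le> - \<lceil>r\<rceil> - 2" by auto
    then have "real_of_int i \<ge> r + 2 \<or> real_of_int i \<le> - r - 2"
      using le_of_int_ceiling[of r] by linarith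
    then have "2 * real_of_int i + y \<notin> {-r..1 + r}" "2 * real_of_int i - y \<notin> {-r..1 + r}"
      using assms(1,3) by auto
    then show "c (2 * real_of_int i + y) + c (2 * real_of_int i - y) = 0" using assms(2) by simp
  qed auto
  then show ?thesis by simp
qed

lemma fold_push_add:
  assumes "r \<ge> 0" "\<And>x. x \<notin> {-r..1 + r} \<Longrightarrow> c1 x = 0" "\<And>x. x \<notin> {-r..1 + r} \<Longrightarrow> c2 x = 0"
    and "y \<in> {0..1}"
  shows "fold_push (\<lambda>x. c1 x + c2 x) y = fold_push c1 y + fold_push c2 y"
  using fold_push_eq_sum[OF assms(1,2,4)] fold_push_eq_sum[OF assms(1,3,4)]
    fold_push_eq_sum[OF assms(1) _ assms(4), of "\<lambda>x. c1 x + c2 x"] assms(2,3)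
  by (simp add: sum.distrib algebra_simps)

lemma variation_along_fold_sum_le:
  assumes "\<And>y. y \<in> set ys \<Longrightarrow> F y = (\<Sum>i\<in>I. c (2 * real_of_int i + y) + c (2 * real_of_int i - y))"
  shows "variation_along F ys \<le> (\<Sum>i\<in>I. variation_along (\<lambda>y. c (2 * real_of_int i + y)) ys
                                         + variation_along (\<lambda>y. c (2 * real_of_int i - y)) ys)"
  using assms
proof (induction F ys rule: variation_along.induct)
  case (1 F x y zs)
  let ?d = "\<lambda>i s. c (2 * real_of_int i + s * y) - c (2 * real_of_int i + s * x)"
  have "\<bar>F y - F x\<bar> = \<bar>\<Sum>i\<in>I. ?d i 1 + ?d i (-1)\<bar>"
    using "1.prems" by (simp add: sum_subtractf[symmetric] algebra_simps)
  also have "\<dots> \<le> (\<Sum>i\<in>I. \<bar>?d i 1\<bar> + \<bar>?d i (-1)\<bar>)"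
    by (rule order_trans[OF sum_abs sum_mono]) (rule abs_triangle_ineq)
  finally show ?case using "1.IH" "1.prems" by (simp add: sum.distrib algebra_simps)
qed auto

lemma sorted_concat_fold_branches:
  fixes ys :: "real list" and js :: "int list"
  assumes ys: "sorted ys" "set ys \<subseteq> {0..1}" and js: "sorted_wrt (<) js"
  shows "sorted (concat (map (\<lambda>i. rev (map (\<lambda>y. 2 * real_of_int i - y) ys)
                                  @ map (\<lambda>y. 2 * real_of_int i + y) ys) js))"
  using js
proof (induction js)
  case (Cons i js)
  let ?B = "\<lambda>i. rev (map (\<lambda>y. 2 * real_of_int i - y) ys) @ map (\<lambda>y. 2 * real_of_int i + y) ys"
  have nonneg: "\<forall>y\<in>set ys. 0 \<le> y" using ys(2) by auto
  have range: "2 * real_of_int j - 1 \<le> x \<and> x \<le> 2 * real_of_int j + 1"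
    if "x \<in> set (?B j)" for j x
    using that ys(2) by auto
  have "sorted (?B i)"
    using ys(1) nonneg by (auto simp: sorted_append sorted_wrt_rev sorted_map sorted_wrt_map
        elim!: sorted_wrt_mono_rel[rotated]) (use nonneg in fastforce)
  moreover have "\<forall>x\<in>set (?B i). \<forall>z\<in>set (concat (map ?B js)). x \<le> z"
  proof (intro ballI)
    fix x z assume x: "x \<in> set (?B i)" and z: "z \<in> set (concat (map ?B js))"
    obtain j where j: "j \<in> set js" "z \<in> set (?B j)" using z by auto
    then have "real_of_int i + 1 \<le> real_of_int j" using Cons.prems by auto
    then show "x \<le> z" using range[OF x] range[OF j(2)] by linarith
  qed
  moreover have "sorted (concat (map ?B js))" using Cons by simp
  ultimately have "sorted (?B i @ concat (map ?B js))" unfolding sorted_append by blast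
  then show ?case by simp
qed simp

text \<open>The branches \<open>y \<mapsto> 2i - y\<close> and \<open>y \<mapsto> 2i + y\<close> of \<open>\<pi>\<^sup>-\<^sup>1\<close> map a sorted list in \<open>[0, 1]\<close>
  into \<open>[2i - 1, 2i]\<close> and \<open>[2i, 2i + 1]\<close>; over increasing \<open>i\<close> these images concatenate to one sorted
  list, so the variations of all branches add up to at most one variation of \<open>c\<close>.\<close>
lemma variation_along_fold_push_le:
  assumes "r \<ge> 0" "\<And>x. x \<notin> {-r..1 + r} \<Longrightarrow> c x = 0"
    and c_var: "\<And>zs. sorted zs \<Longrightarrow> variation_along c zs \<le> B"
    and ys: "sorted ys" "set ys \<subseteq> {0..1}"
  shows "variation_along (fold_push c) ys \<le> B"
proof -
  let ?I = "[-(\<lceil>r\<rceil>+1)..\<lceil>r\<rceil>+1]"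
  let ?B = "\<lambda>i. rev (map (\<lambda>y. 2 * real_of_int i - y) ys) @ map (\<lambda>y. 2 * real_of_int i + y) ys"
  have "variation_along (fold_push c) ys
      \<le> (\<Sum>i\<in>set ?I. variation_along (\<lambda>y. c (2 * real_of_int i + y)) ys
                    + variation_along (\<lambda>y. c (2 * real_of_int i - y)) ys)"
    using fold_push_eq_sum[OF assms(1,2)] ys(2) by (intro variation_along_fold_sum_le) auto
  also have "\<dots> \<le> (\<Sum>i\<in>set ?I. variation_along c (?B i))"
  proof (rule sum_mono)
    fix i :: int
    have "variation_along c (rev (map (\<lambda>y. 2 * real_of_int i - y) ys))
        + variation_along c (map (\<lambda>y. 2 * real_of_int i + y) ys) \<le> variation_along c (?B i)"
      by (rule variation_along_append_ge)
    then show "variation_along (\<lambda>y. c (2 * real_of_int i + y)) ys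
        + variation_along (\<lambda>y. c (2 * real_of_int i - y)) ys \<le> variation_along c (?B i)"
      by (simp only: variation_along_rev variation_along_map o_def)
  qed
  also have "\<dots> = sum_list (map (variation_along c) (map ?B ?I))"
    by (simp add: sum_list_distinct_conv_sum_set)
  also have "\<dots> \<le> variation_along c (concat (map ?B ?I))"
    by (rule variation_along_concat_ge)
  also have "\<dots> \<le> B"
    by (intro c_var sorted_concat_fold_branches[OF ys]) simp
  finally show ?thesis .
qed

lemma noise_op_diff:
  assumes "\<rho> \<in> borel_measurable lebesgue" "\<xi> > 0" "\<And>t. \<bar>\<rho> t\<bar> \<le> R"
    and "\<forall>x. \<bar>x\<bar> > 1/2 \<longrightarrow> \<rho> x = 0"
    and "set_integrable lebesgue {0..1} f1" "set_integrable lebesgue {0..1} f2"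
    and "y \<in> {0..1}"
  shows "noise_op \<rho> \<xi> f1 y = noise_op \<rho> \<xi> f2 y + noise_op \<rho> \<xi> (\<lambda>x. f1 x - f2 x) y"
proof -
  have "conv_ext \<rho> \<xi> f1 = (\<lambda>x. conv_ext \<rho> \<xi> f2 x + conv_ext \<rho> \<xi> (\<lambda>x. f1 x - f2 x) x)"
    using conv_ext_diff[OF assms(1-3,5,6)] by auto
  moreover have "fold_push (\<lambda>x. conv_ext \<rho> \<xi> f2 x + conv_ext \<rho> \<xi> (\<lambda>x. f1 x - f2 x) x) y
      = fold_push (conv_ext \<rho> \<xi> f2) y + fold_push (conv_ext \<rho> \<xi> (\<lambda>x. f1 x - f2 x)) y"
    using assms(2,7) by (intro fold_push_add[of "\<xi> / 2"] conv_ext_eq_0[OF assms(4,2)]) auto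
  ultimately show ?thesis unfolding noise_op_def by simp
qed

lemma variation_along_noise_op_le:
  assumes "\<rho> \<in> borel_measurable lebesgue" "\<xi> > 0" "\<And>t. \<bar>\<rho> t\<bar> \<le> R"
    and "\<And>xs. sorted xs \<Longrightarrow> variation_along \<rho> xs \<le> R"
    and "\<forall>x. \<bar>x\<bar> > 1/2 \<longrightarrow> \<rho> x = 0"
    and "set_integrable lebesgue {0..1} h" "sorted ys" "set ys \<subseteq> {0..1}"
  shows "variation_along (noise_op \<rho> \<xi> h) ys \<le> R / \<xi> * (LINT y:{0..1}|lebesgue. \<bar>h y\<bar>)"
  unfolding noise_op_def using assms(2)
  by (intro variation_along_fold_push_le[of "\<xi> / 2"] conv_ext_eq_0[OF assms(5,2)]
      variation_along_conv_ext_le[OF assms(1-4,6)] assms(7,8)) auto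

section \<open>Integrals and the transfer operator\<close>

lemma set_integral_cong_AE_lebesgue:
  fixes f g :: "'a::euclidean_space \<Rightarrow> real"
  assumes "AE x in lebesgue. x \<in> A \<longrightarrow> f x = g x"
  shows "(LINT x:A|lebesgue. f x) = (LINT x:A|lebesgue. g x)"
proof -
  let ?F = "\<lambda>x. indicator A x *\<^sub>R f x" and ?G = "\<lambda>x. indicator A x *\<^sub>R g x"
  have ae: "AE x in lebesgue. ?F x = ?G x" "AE x in lebesgue. ?G x = ?F x"
    using assms by (auto elim!: eventually_mono split: split_indicator)
  show ?thesis
  proof (cases "?F \<in> borel_measurable lebesgue")
    case True
    then show ?thesis unfolding set_lebesgue_integral_def
      using ae(1) borel_measurable_AE[OF True ae(1)] by (intro integral_cong_AE)
  next
    case False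
    then have "?G \<notin> borel_measurable lebesgue" using borel_measurable_AE[OF _ ae(2)] by blast
    with False show ?thesis unfolding set_lebesgue_integral_def
      by (metis borel_measurable_integrable not_integrable_integral_eq)
  qed
qed

lemma set_integrable_cong_AE_lebesgue:
  fixes f g :: "'a::euclidean_space \<Rightarrow> real"
  assumes "set_integrable lebesgue A f" "AE x in lebesgue. x \<in> A \<longrightarrow> f x = g x"
  shows "set_integrable lebesgue A g"
proof -
  let ?F = "\<lambda>x. indicator A x *\<^sub>R f x" and ?G = "\<lambda>x. indicator A x *\<^sub>R g x"
  have F: "?F \<in> borel_measurable lebesgue"
    using assms(1) unfolding set_integrable_def by (rule borel_measurable_integrable)
  have ae: "AE x in lebesgue. ?F x = ?G x"
    using assms(2) by (auto elim!: eventually_mono split: split_indicator)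
  show ?thesis
    using assms(1) integrable_cong_AE[OF F borel_measurable_AE[OF F ae] ae]
    unfolding set_integrable_def by simp
qed

lemma set_integrable_mult_bounded:
  fixes f s :: "real \<Rightarrow> real"
  assumes f: "set_integrable lebesgue A f" and s: "set_borel_measurable lebesgue A s"
    and "\<And>x. x \<in> A \<Longrightarrow> \<bar>s x\<bar> \<le> 1"
  shows "set_integrable lebesgue A (\<lambda>x. f x * s x)"
proof (rule set_integrable_bound[OF f])
  have "(\<lambda>x. (indicator A x *\<^sub>R f x) * (indicator A x *\<^sub>R s x)) \<in> borel_measurable lebesgue"
    using borel_measurable_integrable[OF f[unfolded set_integrable_def]] s
    unfolding set_borel_measurable_def by (rule borel_measurable_times)
  moreover have "(\<lambda>x. (indicator A x *\<^sub>R f x) * (indicator A x *\<^sub>R s x)) = (\<lambda>x. indicator A x *\<^sub>R (f x * s x))"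
    by (auto simp: indicator_def)
  ultimately show "set_borel_measurable lebesgue A (\<lambda>x. f x * s x)"
    unfolding set_borel_measurable_def by simp
  show "AE x in lebesgue. x \<in> A \<longrightarrow> norm (f x * s x) \<le> norm (f x)"
    using assms(3) by (intro AE_I2) (simp add: abs_mult mult_left_le)
qed

lemma sign_function_AE:
  fixes D :: "real \<Rightarrow> real"
  assumes "set_integrable lebesgue A D"
  obtains s where "s \<in> borel_measurable borel" "\<And>x. \<bar>s x\<bar> \<le> 1"
    "AE x in lebesgue. x \<in> A \<longrightarrow> \<bar>D x\<bar> = D x * s x"
proof -
  have "(\<lambda>x. indicator A x *\<^sub>R D x) \<in> borel_measurable (completion lborel)"
    using borel_measurable_integrable[OF assms[unfolded set_integrable_def]] by simp
  then obtain D' where D': "D' \<in> borel_measurable lborel"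
    and ae: "AE x in lborel. indicator A x *\<^sub>R D x = D' x"
    using completion_ex_borel_measurable_real by blast
  show thesis
  proof
    show "(\<lambda>x. sgn (D' x)) \<in> borel_measurable borel"
      using D' by (simp add: measurable_lborel2)
    show "\<bar>sgn (D' x)\<bar> \<le> 1" for x by (simp add: abs_sgn_eq)
    show "AE x in lebesgue. x \<in> A \<longrightarrow> \<bar>D x\<bar> = D x * sgn (D' x)"
      using AE_completion[OF ae] by eventually_elim (auto simp: sgn_if)
  qed
qed

lemma transfer_operator_integrable:
  "transfer_operator T L \<Longrightarrow> set_integrable lebesgue {0..1} f \<Longrightarrow> set_integrable lebesgue {0..1} (L f)"
  unfolding transfer_operator_def by blast

lemma transfer_operator_L1_contraction:
  assumes T: "nonsingular_map T" and L: "transfer_operator T L"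
    and f1: "set_integrable lebesgue {0..1} f1" and f2: "set_integrable lebesgue {0..1} f2"
  shows "(LINT x:{0..1}|lebesgue. \<bar>L f1 x - L f2 x\<bar>) \<le> (LINT x:{0..1}|lebesgue. \<bar>f1 x - f2 x\<bar>)"
proof -
  note Lf1 = transfer_operator_integrable[OF L f1] and Lf2 = transfer_operator_integrable[OF L f2]
  obtain s where s: "s \<in> borel_measurable borel" and s_le: "\<And>x. \<bar>s x\<bar> \<le> 1"
    and sgn: "AE x in lebesgue. x \<in> {0..1} \<longrightarrow> \<bar>L f1 x - L f2 x\<bar> = (L f1 x - L f2 x) * s x"
    using sign_function_AE[OF set_integral_diff(1)[OF Lf1 Lf2]] by blast
  have "bounded (range s)" using s_le unfolding bounded_iff by auto
  then have dual: "(LINT x:{0..1}|lebesgue. L f x * s x) = (LINT x:{0..1}|lebesgue. f x * s (T x))"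
    if "set_integrable lebesgue {0..1} f" for f
    using L s that unfolding transfer_operator_def by blast
  have "s \<in> borel_measurable lebesgue"
    using s by (intro measurable_completion) (simp add: measurable_lborel2)
  then have "set_borel_measurable lebesgue {0..1} s"
    using borel_measurable_indicator[of "{0..1::real}" lebesgue]
    unfolding set_borel_measurable_def by (intro borel_measurable_scaleR) auto
  then have Ls: "set_integrable lebesgue {0..1} (\<lambda>x. L f x * s x)"
    if "set_integrable lebesgue {0..1} f" for f
    using transfer_operator_integrable[OF L that] s_le by (intro set_integrable_mult_bounded)
  have "T \<in> borel_measurable (restrict_space lebesgue {0..1})"
    using T unfolding nonsingular_map_def by blast
  from measurable_comp[OF this s]
  have "set_borel_measurable lebesgue {0..1} (\<lambda>x. s (T x))"
    unfolding set_borel_measurable_def by (subst (asm) borel_measurable_restrict_space_iff) (auto simp: o_def)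
  then have fsT: "set_integrable lebesgue {0..1} (\<lambda>x. f x * s (T x))"
    if "set_integrable lebesgue {0..1} f" for f
    using that s_le by (intro set_integrable_mult_bounded)
  have "(LINT x:{0..1}|lebesgue. \<bar>L f1 x - L f2 x\<bar>) = (LINT x:{0..1}|lebesgue. (L f1 x - L f2 x) * s x)"
    using sgn by (rule set_integral_cong_AE_lebesgue)
  also have "\<dots> = (LINT x:{0..1}|lebesgue. f1 x * s (T x)) - (LINT x:{0..1}|lebesgue. f2 x * s (T x))"
    using set_integral_diff(2)[OF Ls[OF f1] Ls[OF f2]] dual[OF f1] dual[OF f2]
    by (simp add: left_diff_distrib)
  also have "\<dots> = (LINT x:{0..1}|lebesgue. (f1 x - f2 x) * s (T x))"
    using set_integral_diff(2)[OF fsT[OF f1] fsT[OF f2]] by (simp add: left_diff_distrib)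
  also have "\<dots> \<le> (LINT x:{0..1}|lebesgue. \<bar>f1 x - f2 x\<bar>)"
  proof (rule set_integral_mono)
    show "set_integrable lebesgue {0..1} (\<lambda>x. (f1 x - f2 x) * s (T x))"
      using set_integral_diff(1)[OF fsT[OF f1] fsT[OF f2]] by (simp add: left_diff_distrib)
    show "set_integrable lebesgue {0..1} (\<lambda>x. \<bar>f1 x - f2 x\<bar>)"
      using set_integral_diff(1)[OF f1 f2] by (rule set_integrable_abs)
    fix x
    have "(f1 x - f2 x) * s (T x) \<le> \<bar>f1 x - f2 x\<bar> * \<bar>s (T x)\<bar>"
      by (metis abs_ge_self abs_mult)
    also have "\<dots> \<le> \<bar>f1 x - f2 x\<bar>" using s_le[of "T x"] by (intro mult_left_le) auto
    finally show "(f1 x - f2 x) * s (T x) \<le> \<bar>f1 x - f2 x\<bar>" .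
  qed
  finally show ?thesis .
qed

section \<open>Ulam projection\<close>

lemma set_integrable_const_Icc: "set_integrable lebesgue {a..b::real} (\<lambda>_. c::real)"
  unfolding set_integrable_def by (cases "a \<le> b") (simp_all add: integrable_indicator_iff)

lemma abs_sub_le_chord:
  fixes t \<mu> lo hi :: real
  assumes "lo \<le> t" "t \<le> hi" "lo \<le> \<mu>" "\<mu> \<le> hi"
  shows "(hi - lo) * \<bar>t - \<mu>\<bar> \<le> 2 * (hi - \<mu>) * (t - lo) - (hi - lo) * (t - \<mu>)"
proof -
  have "0 \<le> (hi - t) * (\<mu> - lo)" "0 \<le> (hi - \<mu>) * (t - lo)" using assms by simp_all
  then show ?thesis by (cases "\<mu> \<le> t") (auto simp: algebra_simps)
qed

text \<open>On \<open>[lo, hi]\<close> the convex function \<open>t \<mapsto> |t - \<mu>|\<close> lies below its chord, which is affine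
  in \<open>t\<close>; integrating the chord leaves only the mean \<open>\<mu>\<close>, and AM-GM bounds the result.\<close>
lemma set_integral_abs_deviation_from_mean_le_range:
  fixes p :: "real \<Rightarrow> real"
  assumes ab: "a < b" and p: "set_integrable lebesgue {a..b} p"
    and range: "\<And>x. x \<in> {a..b} \<Longrightarrow> lo \<le> p x \<and> p x \<le> hi"
  shows "(LINT x:{a..b}|lebesgue. \<bar>p x - (LINT y:{a..b}|lebesgue. p y) / (b - a)\<bar>) \<le> (b - a) / 2 * (hi - lo)"
proof -
  define \<mu> where "\<mu> = (LINT y:{a..b}|lebesgue. p y) / (b - a)"
  have const: "(LINT x:{a..b}|lebesgue. c) = (b - a) * c" for c :: real
    using ab set_integral_const[of "{a..b}" lebesgue c] by simp
  have int_p: "(LINT y:{a..b}|lebesgue. p y) = (b - a) * \<mu>" using ab by (simp add: \<mu>_def)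
  have "(LINT x:{a..b}|lebesgue. lo) \<le> (LINT x:{a..b}|lebesgue. p x)"
    by (rule set_integral_mono[OF set_integrable_const_Icc p]) (use range in auto)
  then have lo_\<mu>: "lo \<le> \<mu>" using ab by (simp add: const int_p)
  have "(LINT x:{a..b}|lebesgue. p x) \<le> (LINT x:{a..b}|lebesgue. hi)"
    by (rule set_integral_mono[OF p set_integrable_const_Icc]) (use range in auto)
  then have \<mu>_hi: "\<mu> \<le> hi" using ab by (simp add: const int_p)
  have shift: "set_integrable lebesgue {a..b} (\<lambda>x. p x - c)" for c
    using p set_integrable_const_Icc by (rule set_integral_diff(1))
  have integral_shift: "(LINT x:{a..b}|lebesgue. p x - c) = (b - a) * (\<mu> - c)" for c
    using set_integral_diff(2)[OF p set_integrable_const_Icc] by (simp add: int_p const right_diff_distrib)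
  show ?thesis
  proof (cases "lo < hi")
    case False
    then have "\<forall>x. x \<in> {a..b} \<longrightarrow> \<bar>p x - \<mu>\<bar> = 0" using range lo_\<mu> \<mu>_hi by fastforce
    then show ?thesis
      using set_lebesgue_integral_cong[of "{a..b}" lebesgue "\<lambda>x. \<bar>p x - \<mu>\<bar>" "\<lambda>_. 0"] lo_\<mu> \<mu>_hi ab
      by (simp add: \<mu>_def)
  next
    case True
    define \<kappa> where "\<kappa> = 2 * (hi - \<mu>) / (hi - lo)"
    have chord: "\<bar>p x - \<mu>\<bar> \<le> \<kappa> * (p x - lo) - (p x - \<mu>)" if "x \<in> {a..b}" for x
      using abs_sub_le_chord[of lo "p x" hi \<mu>] range[OF that] lo_\<mu> \<mu>_hi True
      by (simp add: \<kappa>_def field_simps)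
    have "(LINT x:{a..b}|lebesgue. \<bar>p x - \<mu>\<bar>) \<le> (LINT x:{a..b}|lebesgue. \<kappa> * (p x - lo) - (p x - \<mu>))"
      using set_integrable_abs[OF shift] chord
      by (intro set_integral_mono set_integral_diff(1) set_integrable_mult_right shift) auto
    also have "\<dots> = \<kappa> * ((b - a) * (\<mu> - lo))"
      using set_integral_diff(2)[OF set_integrable_mult_right[OF shift] shift]
      by (simp add: integral_shift)
    also have "\<dots> = (b - a) * (2 * ((hi - \<mu>) * (\<mu> - lo))) / (hi - lo)"
      by (simp add: \<kappa>_def)
    also have "\<dots> \<le> (b - a) * ((hi - lo)\<^sup>2 / 2) / (hi - lo)"
    proof -
      have "4 * ((hi - \<mu>) * (\<mu> - lo)) \<le> (hi - lo)\<^sup>2"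
        using sum_squares_ge_zero[of "hi - \<mu> - (\<mu> - lo)" 0] by (simp add: power2_eq_square algebra_simps)
      then show ?thesis using ab True by (intro divide_right_mono mult_left_mono) auto
    qed
    also have "\<dots> = (b - a) / 2 * (hi - lo)" using True by (simp add: power2_eq_square field_simps)
    finally show ?thesis by (simp add: \<mu>_def)
  qed
qed

lemma set_integral_abs_deviation_from_mean_le:
  fixes p :: "real \<Rightarrow> real"
  assumes ab: "a < b" and p: "set_integrable lebesgue {a..b} p"
    and osc: "\<And>x y. x \<in> {a..b} \<Longrightarrow> y \<in> {a..b} \<Longrightarrow> p x - p y \<le> D"
  shows "(LINT x:{a..b}|lebesgue. \<bar>p x - (LINT y:{a..b}|lebesgue. p y) / (b - a)\<bar>) \<le> (b - a) / 2 * D"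
proof -
  define lo where "lo = Inf (p ` {a..b})"
  have "lo \<le> p x \<and> p x \<le> lo + D" if x: "x \<in> {a..b}" for x
  proof
    have below: "p x - D \<le> p y" if "y \<in> {a..b}" for y using osc[OF x that] by simp
    show "lo \<le> p x" unfolding lo_def
      using x below by (intro cInf_lower bdd_belowI[where m="p x - D"]) auto
    have "p x - D \<le> lo" unfolding lo_def
      using ab below by (intro cInf_greatest) auto
    then show "p x \<le> lo + D" by simp
  qed
  from set_integral_abs_deviation_from_mean_le_range[OF ab p this] show ?thesis by simp
qed

definition cumulative_variation :: "(real \<Rightarrow> real) \<Rightarrow> real \<Rightarrow> real" where
  "cumulative_variation g t = Sup {variation_along g ys | ys. sorted ys \<and> set ys \<subseteq> {0..t}}"

context
  fixes g :: "real \<Rightarrow> real" and V :: real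
  assumes variation_bounded:
    "\<And>ys. sorted ys \<Longrightarrow> set ys \<subseteq> {0..1} \<Longrightarrow> variation_along g ys \<le> V"
begin

lemma cumulative_variation_upper:
  assumes "sorted ys" "set ys \<subseteq> {0..t}" "t \<le> 1"
  shows "variation_along g ys \<le> cumulative_variation g t"
  unfolding cumulative_variation_def
proof (rule cSup_upper)
  show "bdd_above {variation_along g ys | ys. sorted ys \<and> set ys \<subseteq> {0..t}}"
    using variation_bounded \<open>t \<le> 1\<close> by (intro bdd_aboveI[where M=V]) force
qed (use assms in blast)

lemma cumulative_variation_nonneg: "0 \<le> t \<Longrightarrow> t \<le> 1 \<Longrightarrow> 0 \<le> cumulative_variation g t"
  using cumulative_variation_upper[of "[]" t] by simp

lemma cumulative_variation_le: "cumulative_variation g 1 \<le> V"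
  unfolding cumulative_variation_def
  by (rule cSup_least) (auto intro!: exI[of _ "[]"] variation_bounded)

lemma cumulative_variation_increment:
  assumes "0 \<le> x" "x \<le> y" "y \<le> 1"
  shows "cumulative_variation g x + \<bar>g y - g x\<bar> \<le> cumulative_variation g y"
proof -
  have "variation_along g ys \<le> cumulative_variation g y - \<bar>g y - g x\<bar>"
    if "sorted ys" "set ys \<subseteq> {0..x}" for ys
  proof -
    have "variation_along g ys + \<bar>g y - g x\<bar> \<le> variation_along g (ys @ [x]) + \<bar>g y - g x\<bar>"
      using variation_along_append_ge[of g ys "[x]"] by simp
    also have "\<dots> = variation_along g (ys @ [x, y])" by (simp add: variation_along_snoc)
    also have "\<dots> \<le> cumulative_variation g y"
      using that assms by (intro cumulative_variation_upper) (auto simp: sorted_append)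
    finally show ?thesis by simp
  qed
  then have "cumulative_variation g x \<le> cumulative_variation g y - \<bar>g y - g x\<bar>"
    unfolding cumulative_variation_def[of g x] by (intro cSup_least) (auto intro!: exI[of _ "[]"])
  then show ?thesis by simp
qed

lemma cumulative_variation_mono:
  "0 \<le> x \<Longrightarrow> x \<le> y \<Longrightarrow> y \<le> 1 \<Longrightarrow> cumulative_variation g x \<le> cumulative_variation g y"
  using cumulative_variation_increment[of x y] by linarith

lemma oscillation_le_cumulative_variation:
  assumes "0 \<le> a" "b \<le> 1" "x \<in> {a..b}" "y \<in> {a..b}"
  shows "g x - g y \<le> cumulative_variation g b - cumulative_variation g a"
proof -
  let ?v = "cumulative_variation g"
  have "\<bar>g x - g y\<bar> \<le> ?v (max x y) - ?v (min x y)"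
    using cumulative_variation_increment[of "min x y" "max x y"] assms
    by (auto simp: min_def max_def abs_minus_commute)
  moreover have "?v a \<le> ?v (min x y)" "?v (max x y) \<le> ?v b"
    using assms by (auto intro!: cumulative_variation_mono)
  ultimately show ?thesis by linarith
qed

end

lemma ulam_eq_on_cell:
  assumes "k < n" "x \<in> {real k / real n ..< real (Suc k) / real n}"
  shows "ulam n g x = real n * (LINT y:{real k / real n .. real (Suc k) / real n}|lebesgue. g y)"
proof -
  have "real k \<le> x * real n" "x * real n < real k + 1"
    using assms by (auto simp: field_simps)
  then have "\<lfloor>x * real n\<rfloor> = int k" by (simp add: floor_eq_iff)
  then show ?thesis using assms(1) by (simp add: ulam_def)
qed

lemma ulam_cong_AE:
  assumes "AE x in lebesgue. x \<in> {0..1} \<longrightarrow> f x = g x"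
  shows "ulam n f = ulam n g"
proof
  fix x
  define k where "k = min (n - 1) (nat \<lfloor>x * real n\<rfloor>)"
  show "ulam n f x = ulam n g x"
  proof (cases "n = 0")
    case False
    then have cell: "{real k / real n .. real (Suc k) / real n} \<subseteq> {0..1}"
      by (auto simp: k_def field_simps)
    have "AE y in lebesgue. y \<in> {real k / real n .. real (Suc k) / real n} \<longrightarrow> f y = g y"
      using assms by (rule eventually_mono) (use cell in blast)
    then show ?thesis
      unfolding ulam_def Let_def k_def[symmetric] by (simp add: set_integral_cong_AE_lebesgue)
  qed (simp add: ulam_def)
qed

lemma ulam_error_on_cell_le:
  assumes "k < n" and g: "set_integrable lebesgue {0..1} g"
    and osc: "\<And>x y. x \<in> {real k / real n .. real (Suc k) / real n} \<Longrightarrow>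
                     y \<in> {real k / real n .. real (Suc k) / real n} \<Longrightarrow> g x - g y \<le> D"
  shows "set_integrable lebesgue {real k / real n ..< real (Suc k) / real n} (\<lambda>x. \<bar>ulam n g x - g x\<bar>)"
    and "(LINT x:{real k / real n ..< real (Suc k) / real n}|lebesgue. \<bar>ulam n g x - g x\<bar>) \<le> D / (2 * real n)"
proof -
  let ?a = "real k / real n" and ?b = "real (Suc k) / real n"
  define m where "m = real n * (LINT y:{?a..?b}|lebesgue. g y)"
  have n: "0 < real n" using assms(1) by simp
  have ab: "?a < ?b" using n by (simp add: divide_strict_right_mono)
  have width: "?b - ?a = 1 / real n" using n by (simp add: field_simps)
  have cell: "{?a..?b} \<subseteq> {0..1}" using assms(1) by (auto simp: field_simps)
  have g_cell: "set_integrable lebesgue {?a..?b} g" by (rule set_integrable_subset[OF g _ cell]) auto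
  then have dev: "set_integrable lebesgue {?a..?b} (\<lambda>x. \<bar>g x - m\<bar>)"
    by (intro set_integrable_abs set_integral_diff(1) set_integrable_const_Icc)
  have on_cell: "\<bar>ulam n g x - g x\<bar> = \<bar>g x - m\<bar>" if "x \<in> {?a..<?b}" for x
    using ulam_eq_on_cell[OF assms(1) that] by (simp add: m_def abs_minus_commute)
  show "set_integrable lebesgue {?a..<?b} (\<lambda>x. \<bar>ulam n g x - g x\<bar>)"
  proof (subst set_integrable_cong)
    show "set_integrable lebesgue {?a..<?b} (\<lambda>x. \<bar>g x - m\<bar>)"
      by (rule set_integrable_subset[OF dev]) auto
  qed (use on_cell in auto)
  have "(LINT x:{?a..<?b}|lebesgue. \<bar>ulam n g x - g x\<bar>) = (LINT x:{?a..<?b}|lebesgue. \<bar>g x - m\<bar>)"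
    using on_cell by (intro set_lebesgue_integral_cong) auto
  also have "\<dots> = (LINT x:{?a..?b}|lebesgue. \<bar>g x - m\<bar>)"
    by (rule set_integral_discrete_difference[where X="{?b}"]) auto
  also have "\<dots> = (LINT x:{?a..?b}|lebesgue. \<bar>g x - (LINT y:{?a..?b}|lebesgue. g y) / (?b - ?a)\<bar>)"
    unfolding width m_def by (simp add: mult.commute)
  also have "\<dots> \<le> (?b - ?a) / 2 * D"
    by (rule set_integral_abs_deviation_from_mean_le[OF ab g_cell osc])
  also have "\<dots> = D / (2 * real n)"
    unfolding width by simp
  finally show "(LINT x:{?a..<?b}|lebesgue. \<bar>ulam n g x - g x\<bar>) \<le> D / (2 * real n)" .
qed

lemma atLeastLessThan_0_1_eq_UN_cells:
  assumes "n > 0"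
  shows "{0..<1} = (\<Union>k<n. {real k / real n ..< real (Suc k) / real n})"
proof (intro equalityI subsetI)
  fix x :: real assume x: "x \<in> {0..<1}"
  define k where "k = nat \<lfloor>x * real n\<rfloor>"
  have "real k \<le> x * real n" "x * real n < real k + 1" "k < n"
    using x assms by (auto simp: k_def nat_less_iff floor_less_iff)
  then show "x \<in> (\<Union>k<n. {real k / real n ..< real (Suc k) / real n})"
    using assms by (auto simp: field_simps)
next
  fix x assume "x \<in> (\<Union>k<n. {real k / real n ..< real (Suc k) / real n})"
  then obtain k where k: "k < n" "real k / real n \<le> x" "x < real (Suc k) / real n" by auto
  moreover have "real (Suc k) / real n \<le> 1" using k(1) by (simp add: field_simps)
  moreover have "0 \<le> real k / real n" by simp
  ultimately show "x \<in> {0..<1}" by (simp only: atLeastLessThan_iff) linarith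
qed

lemma disjoint_family_cells:
  "disjoint_family (\<lambda>k. {real k / real n ..< real (Suc k) / real n})"
  unfolding disjoint_family_on_def
proof (intro ballI impI)
  fix i j :: nat assume "i \<noteq> j"
  then have "real (Suc i) / real n \<le> real j / real n \<or> real (Suc j) / real n \<le> real i / real n"
    by (cases "i < j") (auto intro: divide_right_mono)
  then show "{real i / real n ..< real (Suc i) / real n} \<inter> {real j / real n ..< real (Suc j) / real n} = {}"
    by auto
qed

lemma ulam_error_le:
  assumes n: "n > 0" and g: "set_integrable lebesgue {0..1} g"
    and variation_bounded: "\<And>ys. sorted ys \<Longrightarrow> set ys \<subseteq> {0..1} \<Longrightarrow> variation_along g ys \<le> V"
  shows "(LINT x:{0..1}|lebesgue. \<bar>ulam n g x - g x\<bar>) \<le> V / (2 * real n)"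
proof -
  let ?v = "\<lambda>k. cumulative_variation g (real k / real n)"
  let ?cell = "\<lambda>k. {real k / real n ..< real (Suc k) / real n}"
  let ?err = "\<lambda>x. \<bar>ulam n g x - g x\<bar>"
  have cell_le: "set_integrable lebesgue (?cell k) ?err"
    "(LINT x:?cell k|lebesgue. ?err x) \<le> (?v (Suc k) - ?v k) / (2 * real n)" if k: "k < n" for k
  proof -
    have bounds: "0 \<le> real k / real n" "real (Suc k) / real n \<le> 1"
      using k by (simp_all add: field_simps)
    have osc: "g x - g y \<le> ?v (Suc k) - ?v k"
      if "x \<in> {real k / real n .. real (Suc k) / real n}" "y \<in> {real k / real n .. real (Suc k) / real n}" for x y
      by (rule oscillation_le_cumulative_variation[OF variation_bounded bounds that])
    show "set_integrable lebesgue (?cell k) ?err"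
      "(LINT x:?cell k|lebesgue. ?err x) \<le> (?v (Suc k) - ?v k) / (2 * real n)"
      using ulam_error_on_cell_le[OF k g osc] by auto
  qed
  have "(LINT x:{0..1}|lebesgue. ?err x) = (LINT x:{0..<1}|lebesgue. ?err x)"
    by (rule set_integral_discrete_difference[where X="{1}"]) auto
  also have "\<dots> = (\<Sum>k<n. LINT x:?cell k|lebesgue. ?err x)"
    unfolding atLeastLessThan_0_1_eq_UN_cells[OF n]
    using disjoint_family_cells[of n] cell_le(1)
    by (intro set_integral_finite_Union) (auto simp: disjoint_family_on_def)
  also have "\<dots> \<le> (\<Sum>k<n. (?v (Suc k) - ?v k) / (2 * real n))"
    using cell_le(2) by (intro sum_mono) auto
  also have "\<dots> = (\<Sum>k<n. ?v (Suc k) - ?v k) / (2 * real n)"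
    by (simp add: sum_divide_distrib)
  also have "\<dots> = (?v n - ?v 0) / (2 * real n)"
    by (simp only: sum_lessThan_telescope[of ?v n])
  also have "\<dots> = (cumulative_variation g 1 - cumulative_variation g 0) / (2 * real n)"
    using n by simp
  also have "\<dots> \<le> V / (2 * real n)"
    using cumulative_variation_nonneg[OF variation_bounded, of 0] cumulative_variation_le[OF variation_bounded]
    by (intro divide_right_mono) auto
  finally show ?thesis .
qed

lemma ulam_error_le_tvar:
  assumes "n > 0" "set_integrable lebesgue {0..1} g"
  shows "ereal (LINT x:{0..1}|lebesgue. \<bar>ulam n g x - g x\<bar>) \<le> ereal (1 / (2 * real n)) * tvar g {0..1}"
proof (cases "tvar g {0..1} = \<infinity>")
  case False
  then have "tvar g {0..1} < \<infinity>" by (simp add: less_top)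
  then obtain V where "tvar g {0..1} = ereal V"
    and "\<And>ys. sorted ys \<Longrightarrow> set ys \<subseteq> {0..1} \<Longrightarrow> variation_along g ys \<le> V"
    by (rule tvar_finite_bound) auto
  with ulam_error_le[OF assms] show ?thesis by simp
qed (use assms in simp)

lemma tvar_noise_op_transfer_le:
  assumes T: "nonsingular_map T" and L: "transfer_operator T L"
    and \<rho>: "\<rho> \<in> borel_measurable lebesgue" "\<And>t. \<bar>\<rho> t\<bar> \<le> R"
      "\<And>xs. sorted xs \<Longrightarrow> variation_along \<rho> xs \<le> R" "\<forall>x. \<bar>x\<bar> > 1/2 \<longrightarrow> \<rho> x = 0"
    and "\<xi> > 0"
    and f1: "set_integrable lebesgue {0..1} f1" and f2: "set_integrable lebesgue {0..1} f2"
  shows "tvar (noise_op \<rho> \<xi> (L f1)) {0..1}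
    \<le> tvar (noise_op \<rho> \<xi> (L f2)) {0..1} + ereal (R / \<xi> * (LINT x:{0..1}|lebesgue. \<bar>f1 x - f2 x\<bar>))"
proof (rule tvar_le_add)
  fix ys :: "real list" assume ys: "sorted ys" "set ys \<subseteq> {0..1}"
  note Lf = transfer_operator_integrable[OF L f1] transfer_operator_integrable[OF L f2]
  have "variation_along (noise_op \<rho> \<xi> (L f1)) ys
      \<le> variation_along (noise_op \<rho> \<xi> (L f2)) ys
        + variation_along (noise_op \<rho> \<xi> (\<lambda>x. L f1 x - L f2 x)) ys"
    using noise_op_diff[OF \<rho>(1) \<open>\<xi> > 0\<close> \<rho>(2,4) Lf] ys(2) by (intro variation_along_add_le) auto
  also have "\<dots> \<le> variation_along (noise_op \<rho> \<xi> (L f2)) ys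
      + R / \<xi> * (LINT x:{0..1}|lebesgue. \<bar>L f1 x - L f2 x\<bar>)"
    using variation_along_noise_op_le[OF \<rho>(1) \<open>\<xi> > 0\<close> \<rho>(2-4) set_integral_diff(1)[OF Lf] ys]
    by simp
  also have "\<dots> \<le> variation_along (noise_op \<rho> \<xi> (L f2)) ys
      + R / \<xi> * (LINT x:{0..1}|lebesgue. \<bar>f1 x - f2 x\<bar>)"
    using transfer_operator_L1_contraction[OF T L f1 f2] \<rho>(2)[of 0] \<open>\<xi> > 0\<close>
    by (intro add_left_mono mult_left_mono) auto
  finally show "variation_along (noise_op \<rho> \<xi> (L f1)) ys
      \<le> variation_along (noise_op \<rho> \<xi> (L f2)) ys + R / \<xi> * (LINT x:{0..1}|lebesgue. \<bar>f1 x - f2 x\<bar>)" .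
qed

theorem lemma23:
  fixes T :: "real \<Rightarrow> real" and L :: "(real \<Rightarrow> real) \<Rightarrow> (real \<Rightarrow> real)"
    and \<rho> f\<^sub>\<xi> f' :: "real \<Rightarrow> real" and \<xi> \<delta> :: real and n :: nat
  assumes T: "nonsingular_map T"
    and L: "transfer_operator T L"
    and rho_bv: "tvar \<rho> UNIV < \<infinity>"
    and rho_supp: "\<forall>x. \<bar>x\<bar> > 1/2 \<longrightarrow> \<rho> x = 0"
    and rho_int: "integrable lebesgue \<rho>" "(LINT x|lebesgue. \<rho> x) = 1"
    and xi: "\<xi> > 0"
    and delta: "n > 0" "\<delta> = 1 / real n"
    and inv_int: "set_integrable lebesgue {0..1} f\<^sub>\<xi>"
    and inv_nonneg: "AE x in lebesgue. x \<in> {0..1} \<longrightarrow> f\<^sub>\<xi> x \<ge> 0"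
    and inv_prob: "(LINT x:{0..1}|lebesgue. f\<^sub>\<xi> x) = 1"
    and inv_fix: "AE x in lebesgue. x \<in> {0..1} \<longrightarrow> noise_op \<rho> \<xi> (L f\<^sub>\<xi>) x = f\<^sub>\<xi> x"
    and f'_int: "set_integrable lebesgue {0..1} f'"
  shows "ereal (LINT x:{0..1}|lebesgue. \<bar>ulam n f\<^sub>\<xi> x - f\<^sub>\<xi> x\<bar>)
     \<le> ereal (\<delta> / 2 / \<xi>) * tvar \<rho> UNIV * ereal (LINT x:{0..1}|lebesgue. \<bar>f\<^sub>\<xi> x - f' x\<bar>)
       + ereal (\<delta> / 2) * tvar (noise_op \<rho> \<xi> (L f')) {0..1}"
proof -
  obtain R where R: "tvar \<rho> UNIV = ereal R" "0 \<le> R"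
    and \<rho>_var: "\<And>xs. sorted xs \<Longrightarrow> variation_along \<rho> xs \<le> R"
    using tvar_finite_bound[OF rho_bv] by auto
  have \<rho>_abs: "\<bar>\<rho> t\<bar> \<le> R" for t using abs_le_variation_bound[OF \<rho>_var, of 1] rho_supp by auto
  define g where "g = noise_op \<rho> \<xi> (L f\<^sub>\<xi>)"
  define E where "E = (LINT x:{0..1}|lebesgue. \<bar>f\<^sub>\<xi> x - f' x\<bar>)"
  have fixed: "AE x in lebesgue. x \<in> {0..1} \<longrightarrow> f\<^sub>\<xi> x = g x"
    using inv_fix unfolding g_def by (auto elim!: eventually_mono)
  have "ereal (LINT x:{0..1}|lebesgue. \<bar>ulam n f\<^sub>\<xi> x - f\<^sub>\<xi> x\<bar>)
      = ereal (LINT x:{0..1}|lebesgue. \<bar>ulam n g x - g x\<bar>)"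
    unfolding ulam_cong_AE[OF fixed]
    by (rule arg_cong[OF set_integral_cong_AE_lebesgue]) (use fixed in \<open>auto elim!: eventually_mono\<close>)
  also have "\<dots> \<le> ereal (\<delta> / 2) * tvar g {0..1}"
    using ulam_error_le_tvar[OF delta(1) set_integrable_cong_AE_lebesgue[OF inv_int fixed]] delta
    by (simp add: mult.commute)
  also have "\<dots> \<le> ereal (\<delta> / 2) * (tvar (noise_op \<rho> \<xi> (L f')) {0..1} + ereal (R / \<xi> * E))"
    unfolding g_def E_def using delta
    by (intro ereal_mult_left_mono tvar_noise_op_transfer_le[OF T L _ \<rho>_abs \<rho>_var rho_supp xi inv_int f'_int]
        borel_measurable_integrable rho_int) auto
  also have "\<dots> = ereal (\<delta> / 2 / \<xi>) * tvar \<rho> UNIV * ereal E + ereal (\<delta> / 2) * tvar (noise_op \<rho> \<xi> (L f')) {0..1}"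
    using R by (simp add: ereal_distrib_left add.commute mult.assoc)
  finally show ?thesis unfolding E_def .
qed

end
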